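(* Let $\alpha_1,\alpha_2\in\mathbb{R}\setminus\{0\}$, $r=\alpha_2/\alpha_1$. For every $b\in\mathbb{R}$, there is no constant $C$ such that $$\|(\partial_xw_1)w_2\|_{X^{\alpha_1}_{s,b-1}}\le C\|w_1\|_{X^{\alpha_1}_{s,b}}\|w_2\|_{X^{\alpha_2}_{s,b}}$$ holds for all $w_1\in X^{\alpha_1}_{s,b}$, $w_2\in X^{\alpha_2}_{s,b}$ with $\hat w_2(0,\cdot)=0$, in each of the situations: (a) $r<\frac14$ and $s<-\frac14$; (b) $r=1$ and $s<\frac12$; (c) $r\in[\frac14,\infty)\setminus\{1\}$ and $s<s_r$. Moreover, (d) for any $r\ne0$ and any $s\in\mathbb{R}$ there is no such $C$ if the restriction $\hat w_2(0,\cdot)=0$ is dropped.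
   Context: On $\mathbb{T}=\mathbb{R}/(2\pi\mathbb{Z})$: $\hat w(k,\tau)=\int_\mathbb{R}\int_0^{2\pi}e^{-i(\tau t+kx)}w(x,t)\,dx\,dt$, $k\in\mathbb{Z}$; $\langle\cdot\rangle=1+|\cdot|$; $X^{\alpha}_{s,b}$ is the completion of Schwartz functions under $\|w\|=\|\langle k\rangle^s\langle\tau-\alpha k^3\rangle^b\hat w(k,\tau)\|_{L^2(\mathbb{Z}\times\mathbb{R})}$. Irrationality exponent $\mu(\rho)=\sup\{\mu:0<|\rho-m/n|<|n|^{-\mu}$ for infinitely many $(m,n)\in\mathbb{Z}\times(\mathbb{Z}\setminus\{0\})\}$; for $r\ge\frac14$, $\sigma_r=\mu(\sqrt{12r-3})$, $s_r=1$ if $\sigma_r=1$ or $\sigma_r\ge3$, $s_r=(\sigma_r-1)/2$ if $2\le\sigma_r<3$. *)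

theory Defs
  imports "HOL-Analysis.Analysis"
begin

definition jbr :: "real \<Rightarrow> real" where
  "jbr x = 1 + \<bar>x\<bar>"

text \<open>Space-time functions on T x R are represented by their space-time Fourier
  transforms u k tau = hat w (k, tau), with k :: int and tau :: real.\<close>
definition Xweight :: "real \<Rightarrow> real \<Rightarrow> real \<Rightarrow> int \<Rightarrow> real \<Rightarrow> real" where
  "Xweight \<alpha> s b k \<tau> = (jbr (real_of_int k)) powr s * (jbr (\<tau> - \<alpha> * (real_of_int k)^3)) powr b"

definition Xnorm2 :: "real \<Rightarrow> real \<Rightarrow> real \<Rightarrow> (int \<Rightarrow> real \<Rightarrow> complex) \<Rightarrow> ennreal" where
  "Xnorm2 \<alpha> s b u =
     (\<integral>\<^sup>+ k. (\<integral>\<^sup>+ t. ennreal ((Xweight \<alpha> s b k t * cmod (u k t))^2) \<partial>lborel) \<partial>count_space UNIV)"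

definition inX :: "real \<Rightarrow> real \<Rightarrow> real \<Rightarrow> (int \<Rightarrow> real \<Rightarrow> complex) \<Rightarrow> bool" where
  "inX \<alpha> s b u \<longleftrightarrow> (\<forall>k. u k \<in> borel_measurable lborel) \<and> Xnorm2 \<alpha> s b u < \<infinity>"

text \<open>Fourier transform of the product (\<partial>_x w1) w2, with the normalisation
  hat w = int int e^{-i(tau t + k x)} w dx dt, so that
  hat(f g) = (2 pi)^{-2} (hat f * hat g) and hat(\<partial>_x w1)(k,tau) = i k hat w1(k,tau).\<close>
definition dxprod_ft :: "(int \<Rightarrow> real \<Rightarrow> complex) \<Rightarrow> (int \<Rightarrow> real \<Rightarrow> complex) \<Rightarrow> int \<Rightarrow> real \<Rightarrow> complex" where
  "dxprod_ft u1 u2 k \<tau> =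
     complex_of_real (1 / (4 * pi\<^sup>2)) *
     (\<Sum>\<^sub>\<infinity>k1\<in>(UNIV::int set).
        LINT \<tau>1|lborel. \<i> * of_int k1 * u1 k1 \<tau>1 * u2 (k - k1) (\<tau> - \<tau>1))"

definition bilinear_est :: "real \<Rightarrow> real \<Rightarrow> real \<Rightarrow> real \<Rightarrow> bool \<Rightarrow> bool" where
  "bilinear_est \<alpha>1 \<alpha>2 s b meanzero \<longleftrightarrow>
     (\<exists>C::real. \<forall>u1 u2. inX \<alpha>1 s b u1 \<longrightarrow> inX \<alpha>2 s b u2 \<longrightarrow>
        (meanzero \<longrightarrow> (\<forall>\<tau>. u2 0 \<tau> = 0)) \<longrightarrow>
        Xnorm2 \<alpha>1 s (b - 1) (dxprod_ft u1 u2)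
          \<le> ennreal (C\<^sup>2) * Xnorm2 \<alpha>1 s b u1 * Xnorm2 \<alpha>2 s b u2)"

definition irr_exp :: "real \<Rightarrow> ereal" where
  "irr_exp \<rho> = Sup (ereal ` {\<mu>::real. infinite {(m, n::int). n \<noteq> 0 \<and>
        0 < \<bar>\<rho> - real_of_int m / real_of_int n\<bar> \<and>
        \<bar>\<rho> - real_of_int m / real_of_int n\<bar> < \<bar>real_of_int n\<bar> powr (-\<mu>)}})"

definition sigma_r :: "real \<Rightarrow> ereal" where
  "sigma_r r = irr_exp (sqrt (12 * r - 3))"

definition s_r :: "real \<Rightarrow> real" where
  "s_r r = (if sigma_r r = 1 \<or> sigma_r r \<ge> 3 then 1
            else if 2 \<le> sigma_r r \<and> sigma_r r < 3 then (real_of_ereal (sigma_r r) - 1) / 2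
            else undefined)"

end

theory Submission
  imports Defs "HOL-Analysis.Kronecker_Approximation_Theorem"
begin

text \<open>Test the estimate on pairs of bumps: the transform of \<open>w\<^sub>j\<close> is the indicator of
  \<open>{K\<^sub>j} \<times> [a\<^sub>j, a\<^sub>j + 1]\<close>, a unit interval at distance \<open>\<sigma>\<^sub>j\<close> from the curve
  \<open>\<tau> = \<alpha>\<^sub>j K\<^sub>j\<^sup>3\<close>. At frequency \<open>K1 + K2\<close> the transform of \<open>(\<partial>\<^sub>x w1) w2\<close> is at least
  \<open>|K1|/(8\<pi>\<^sup>2)\<close> on a unit interval at distance \<open>H + \<sigma>1 + \<sigma>2\<close> from \<open>\<tau> = \<alpha>1 (K1 + K2)\<^sup>3\<close>,
  where \<open>H = \<alpha>1 K1\<^sup>3 + \<alpha>2 K2\<^sup>3 - \<alpha>1 (K1 + K2)\<^sup>3\<close> is the resonance function. The offsets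
  \<open>(0, 0)\<close> and \<open>(-H, 0)\<close> show that the estimate forces \<open>P(K1, K2) \<langle>H\<rangle>\<^sup>-\<^sup>1\<^sup>/\<^sup>2 \<le> const \<cdot> C\<close>
  for the gain \<open>P = |K1| \<langle>K1 + K2\<rangle>\<^sup>s / (\<langle>K1\<rangle>\<^sup>s \<langle>K2\<rangle>\<^sup>s)\<close>, and this quantity is unbounded:
  along \<open>K2 = 0\<close>, where \<open>H = 0\<close>, in case (d); along \<open>(N, -N)\<close>, where \<open>H = (\<alpha>1 - \<alpha>2) N\<^sup>3\<close>,
  in cases (a) and (b). In case (c) write \<open>\<alpha>2/\<alpha>1 = (\<rho>\<^sup>2 + 3)/12\<close>; along \<open>(m - 3n, 6n)\<close> the
  resonance \<open>H = 18 \<alpha>1 n (\<rho>n - m)(\<rho>n + m)\<close> is \<open>O(n\<^sup>3\<^sup>-\<^sup>\<mu>)\<close> whenever \<open>|\<rho> - m/n| \<le> n\<^sup>-\<^sup>\<mu>\<close>,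
  while \<open>P\<close> is of order \<open>n\<^sup>1\<^sup>-\<^sup>s\<close>. Such fractions exist with arbitrarily large \<open>n\<close> for some
  \<open>\<mu> \<le> 3\<close> with \<open>(\<mu> - 1)/2 > s\<close>: exact ones if \<open>\<rho>\<close> is rational, and otherwise by Dirichlet's
  theorem and the definition of the irrationality exponent \<open>\<sigma>\<^sub>r\<close>.\<close>

lemma jbr_pos: "jbr x > 0"
  and jbr_ge_1: "jbr x \<ge> 1"
  by (auto simp: jbr_def)

lemma jbr_nonzero [simp]: "jbr x \<noteq> 0"
  using jbr_pos[of x] by simp

lemma jbr_0 [simp]: "jbr 0 = 1"
  and jbr_minus [simp]: "jbr (- x) = jbr x"
  by (simp_all add: jbr_def)

lemma jbr_le_mult:
  assumes "\<bar>x - y\<bar> \<le> d"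
  shows "jbr x \<le> (1 + d) * jbr y"
proof -
  have "\<bar>x\<bar> \<le> \<bar>y\<bar> + d" "d * \<bar>y\<bar> \<ge> 0" using assms by auto
  then show ?thesis by (simp add: jbr_def algebra_simps)
qed

lemma jbr_powr_le:
  assumes "\<bar>x - y\<bar> \<le> d"
  shows "jbr x powr e \<le> (1 + d) powr \<bar>e\<bar> * jbr y powr e"
proof (cases "e \<ge> 0")
  case True
  have "jbr x powr e \<le> ((1 + d) * jbr y) powr e"
    using jbr_le_mult[OF assms] jbr_pos True by (intro powr_mono2) (auto intro: less_imp_le)
  also have "\<dots> = (1 + d) powr \<bar>e\<bar> * jbr y powr e"
    using True assms jbr_pos[of y] by (simp add: powr_mult)
  finally show ?thesis .
next
  case False
  have "\<bar>y - x\<bar> \<le> d" "d \<ge> 0" using assms by linarith+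
  then have "jbr y / (1 + d) \<le> jbr x"
    using jbr_le_mult[of y x d] by (simp add: field_simps)
  then have "jbr x powr e \<le> (jbr y / (1 + d)) powr e"
    using jbr_pos[of y] \<open>d \<ge> 0\<close> False by (intro powr_mono2') auto
  also have "\<dots> = (1 + d) powr \<bar>e\<bar> * jbr y powr e"
    using False \<open>d \<ge> 0\<close> jbr_pos[of y] by (simp add: powr_divide powr_minus divide_simps)
  finally show ?thesis .
qed

lemma Xweight_nonneg: "Xweight \<alpha> s b k \<tau> \<ge> 0"
  by (simp add: Xweight_def)

lemma Xweight_le_near_curve:
  assumes "\<bar>\<tau> - \<alpha> * (real_of_int K)^3 - \<sigma>\<bar> \<le> d"
  shows "Xweight \<alpha> s b K \<tau> \<le> (1 + d) powr \<bar>b\<bar> * (jbr (real_of_int K) powr s * jbr \<sigma> powr b)"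
  using mult_left_mono[OF jbr_powr_le[OF assms, of b], of "jbr (real_of_int K) powr s"]
  by (simp add: Xweight_def mult_ac)

lemma Xweight_ge_near_curve:
  assumes "\<bar>\<tau> - \<alpha> * (real_of_int K)^3 - \<sigma>\<bar> \<le> d"
  shows "(1 + d) powr (- \<bar>b\<bar>) * (jbr (real_of_int K) powr s * jbr \<sigma> powr b) \<le> Xweight \<alpha> s b K \<tau>"
proof -
  have "\<bar>\<sigma> - (\<tau> - \<alpha> * (real_of_int K)^3)\<bar> \<le> d" "d \<ge> 0" using assms by linarith+
  from mult_left_mono[OF jbr_powr_le[OF this(1), of b], of "jbr (real_of_int K) powr s"] this(2)
  show ?thesis
    by (simp add: Xweight_def powr_minus field_simps)
qed

lemma Xnorm2_ge_frequency:
  "(\<integral>\<^sup>+ t. ennreal ((Xweight \<alpha> s b K t * cmod (u K t))^2) \<partial>lborel) \<le> Xnorm2 \<alpha> s b u"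
proof -
  let ?I = "\<lambda>k. \<integral>\<^sup>+ t. ennreal ((Xweight \<alpha> s b k t * cmod (u k t))^2) \<partial>lborel"
  have "?I K = (\<integral>\<^sup>+ k. ?I k * indicator {K} k \<partial>count_space UNIV)" by simp
  also have "\<dots> \<le> (\<integral>\<^sup>+ k. ?I k \<partial>count_space UNIV)"
    by (intro nn_integral_mono) (auto split: split_indicator)
  finally show ?thesis unfolding Xnorm2_def .
qed

lemma Xnorm2_single_frequency:
  assumes "\<And>k t. k \<noteq> K \<Longrightarrow> u k t = 0"
  shows "Xnorm2 \<alpha> s b u = (\<integral>\<^sup>+ t. ennreal ((Xweight \<alpha> s b K t * cmod (u K t))^2) \<partial>lborel)"
  unfolding Xnorm2_def
  by (subst nn_integral_cong[where v = "\<lambda>k. _ k * indicator {K} k"])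
     (auto simp: assms split: split_indicator)

section \<open>Bump test functions\<close>

definition bump :: "int \<Rightarrow> real \<Rightarrow> int \<Rightarrow> real \<Rightarrow> complex" where
  "bump K a k t = (if k = K then complex_of_real (indicator {a..a+1} t) else 0)"

lemma Xnorm2_bump_le:
  assumes "\<And>\<tau>. \<tau> \<in> {a..a+1} \<Longrightarrow> Xweight \<alpha> s b K \<tau> \<le> W"
  shows "Xnorm2 \<alpha> s b (bump K a) \<le> ennreal (W^2)"
proof -
  have "Xnorm2 \<alpha> s b (bump K a)
      = (\<integral>\<^sup>+ t. ennreal ((Xweight \<alpha> s b K t * cmod (bump K a K t))^2) \<partial>lborel)"
    by (rule Xnorm2_single_frequency) (simp add: bump_def)
  also have "\<dots> \<le> (\<integral>\<^sup>+ t. ennreal (W^2) * indicator {a..a+1} t \<partial>lborel)"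
  proof (intro nn_integral_mono)
    fix t
    show "ennreal ((Xweight \<alpha> s b K t * cmod (bump K a K t))^2) \<le> ennreal (W^2) * indicator {a..a+1} t"
    proof (cases "t \<in> {a..a+1}")
      case True
      then have "(Xweight \<alpha> s b K t)^2 \<le> W^2"
        using assms[of t] Xweight_nonneg[of \<alpha> s b K t] by (intro power_mono) auto
      then show ?thesis using True by (simp add: bump_def)
    qed (simp add: bump_def)
  qed
  also have "\<dots> = ennreal (W^2)"
    by (simp add: nn_integral_cmult_indicator)
  finally show ?thesis .
qed

lemma inX_bump: "inX \<alpha> s b (bump K a)"
proof -
  define W where "W = 2 powr \<bar>b\<bar> * (jbr (real_of_int K) powr s * jbr (a - \<alpha> * (real_of_int K)^3) powr b)"
  have "Xweight \<alpha> s b K \<tau> \<le> W" if "\<tau> \<in> {a..a+1}" for \<tau>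
    using Xweight_le_near_curve[of \<tau> \<alpha> K "a - \<alpha> * (real_of_int K)^3" 1] that
    by (simp add: W_def)
  then have "Xnorm2 \<alpha> s b (bump K a) \<le> ennreal (W^2)"
    by (rule Xnorm2_bump_le)
  then have "Xnorm2 \<alpha> s b (bump K a) < \<infinity>"
    using order_le_less_trans by fastforce
  moreover have "bump K a k \<in> borel_measurable lborel" for k
    by (cases "k = K") (simp_all add: bump_def[abs_def])
  ultimately show ?thesis
    by (simp add: inX_def)
qed

text \<open>The convolution of the indicators of two unit intervals is at least \<open>1/2\<close> on the middle
  half of the sum of the intervals.\<close>
lemma norm_dxprod_ft_bump_ge:
  assumes "a + c + 1/2 \<le> \<tau>" "\<tau> \<le> a + c + 3/2"
  shows "\<bar>real_of_int K1\<bar> / (8*pi^2) \<le> cmod (dxprod_ft (bump K1 a) (bump K2 c) (K1+K2) \<tau>)"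
proof -
  define S where "S = {max a (\<tau>-c-1)..min (a+1) (\<tau>-c)}"
  have S_half: "measure lborel S \<ge> 1/2"
    using assms by (simp add: S_def min_def max_def)
  have integrals: "(\<lambda>k1. LINT \<tau>1|lborel. \<i> * of_int k1 * bump K1 a k1 \<tau>1 * bump K2 c (K1+K2-k1) (\<tau>-\<tau>1))
     = (\<lambda>k1. if k1 = K1 then \<i> * of_int K1 * complex_of_real (measure lborel S) else 0)"
  proof
    fix k1
    show "(LINT \<tau>1|lborel. \<i> * of_int k1 * bump K1 a k1 \<tau>1 * bump K2 c (K1+K2-k1) (\<tau>-\<tau>1))
      = (if k1 = K1 then \<i> * of_int K1 * complex_of_real (measure lborel S) else 0)"
    proof (cases "k1 = K1")
      case True
      have "indicator {a..a+1} t * indicator {c..c+1} (\<tau>-t) = (indicator S t :: real)" for t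
        by (auto simp: S_def split: split_indicator)
      then have "(LINT \<tau>1|lborel. \<i> * of_int k1 * bump K1 a k1 \<tau>1 * bump K2 c (K1+K2-k1) (\<tau>-\<tau>1))
          = (LINT \<tau>1|lborel. \<i> * of_int K1 * complex_of_real (indicator S \<tau>1))"
        using True by (intro Bochner_Integration.integral_cong refl) (simp add: bump_def flip: of_real_mult)
      also have "\<dots> = \<i> * of_int K1 * complex_of_real (measure lborel S)"
        by (simp add: S_def)
      finally show ?thesis using True by simp
    qed (simp add: bump_def)
  qed
  have "dxprod_ft (bump K1 a) (bump K2 c) (K1+K2) \<tau>
      = complex_of_real (1 / (4 * pi\<^sup>2)) * (\<i> * of_int K1 * complex_of_real (measure lborel S))"
    unfolding dxprod_ft_def integrals
    by (subst infsum_cong_neutral[where T = "{K1}" and g = "\<lambda>_. \<i> * of_int K1 * complex_of_real (measure lborel S)"])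
       auto
  then have "cmod (dxprod_ft (bump K1 a) (bump K2 c) (K1+K2) \<tau>) = \<bar>real_of_int K1\<bar> * measure lborel S / (4*pi^2)"
    by (simp only: norm_mult norm_of_real norm_ii norm_of_int) simp
  moreover have "\<bar>real_of_int K1\<bar> / (8*pi^2) \<le> \<bar>real_of_int K1\<bar> * measure lborel S / (4*pi^2)"
    using mult_left_mono[OF S_half abs_ge_zero[of "real_of_int K1"]] by (simp add: field_simps)
  ultimately show ?thesis by simp
qed

section \<open>The bound forced by the estimate\<close>

definition bilinear_est_with :: "real \<Rightarrow> real \<Rightarrow> real \<Rightarrow> real \<Rightarrow> bool \<Rightarrow> real \<Rightarrow> bool" where
  "bilinear_est_with \<alpha>1 \<alpha>2 s b meanzero C \<longleftrightarrow>
     (\<forall>u1 u2. inX \<alpha>1 s b u1 \<longrightarrow> inX \<alpha>2 s b u2 \<longrightarrow> (meanzero \<longrightarrow> (\<forall>\<tau>. u2 0 \<tau> = 0)) \<longrightarrow>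
        Xnorm2 \<alpha>1 s (b - 1) (dxprod_ft u1 u2) \<le> ennreal (C\<^sup>2) * Xnorm2 \<alpha>1 s b u1 * Xnorm2 \<alpha>2 s b u2)"

lemma bilinear_est_iff:
  "bilinear_est \<alpha>1 \<alpha>2 s b meanzero \<longleftrightarrow> (\<exists>C. bilinear_est_with \<alpha>1 \<alpha>2 s b meanzero C)"
  by (simp add: bilinear_est_def bilinear_est_with_def)

definition resonance :: "real \<Rightarrow> real \<Rightarrow> int \<Rightarrow> int \<Rightarrow> real" where
  "resonance \<alpha>1 \<alpha>2 K1 K2 =
     \<alpha>1 * (real_of_int K1)^3 + \<alpha>2 * (real_of_int K2)^3 - \<alpha>1 * (real_of_int (K1 + K2))^3"

definition gain :: "real \<Rightarrow> int \<Rightarrow> int \<Rightarrow> real" where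
  "gain s K1 K2 = \<bar>real_of_int K1\<bar> * jbr (real_of_int (K1 + K2)) powr s /
      (jbr (real_of_int K1) powr s * jbr (real_of_int K2) powr s)"

lemma gain_nonneg: "gain s K1 K2 \<ge> 0"
  by (simp add: gain_def)

lemma bump_pair_estimate:
  assumes est: "bilinear_est_with \<alpha>1 \<alpha>2 s b meanzero C"
    and meanzero: "meanzero \<longrightarrow> K2 \<noteq> 0"
    and W1: "\<And>\<tau>. \<tau> \<in> {a..a+1} \<Longrightarrow> Xweight \<alpha>1 s b K1 \<tau> \<le> W1"
    and W2: "\<And>\<tau>. \<tau> \<in> {c..c+1} \<Longrightarrow> Xweight \<alpha>2 s b K2 \<tau> \<le> W2"
    and "0 \<le> V" and V: "\<And>\<tau>. \<tau> \<in> {a+c+1/2..a+c+3/2} \<Longrightarrow> V \<le> Xweight \<alpha>1 s (b-1) (K1+K2) \<tau>"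
  shows "V * \<bar>real_of_int K1\<bar> / (8*pi^2) \<le> \<bar>C\<bar> * W1 * W2"
proof -
  define L where "L = V * \<bar>real_of_int K1\<bar> / (8*pi^2)"
  have "L \<ge> 0" "W1 \<ge> 0" "W2 \<ge> 0"
    using \<open>0 \<le> V\<close> W1[of a] W2[of c] Xweight_nonneg[of \<alpha>1 s b K1 a] Xweight_nonneg[of \<alpha>2 s b K2 c]
    by (auto simp: L_def)
  let ?I = "{a+c+1/2..a+c+3/2}"
  have "ennreal (L^2) = (\<integral>\<^sup>+ t. ennreal (L^2) * indicator ?I t \<partial>lborel)"
    by (simp add: nn_integral_cmult_indicator)
  also have "\<dots> \<le> (\<integral>\<^sup>+ t. ennreal ((Xweight \<alpha>1 s (b-1) (K1+K2) t *
                          cmod (dxprod_ft (bump K1 a) (bump K2 c) (K1+K2) t))^2) \<partial>lborel)"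
  proof (intro nn_integral_mono)
    fix t
    show "ennreal (L^2) * indicator ?I t \<le> ennreal ((Xweight \<alpha>1 s (b-1) (K1+K2) t *
                  cmod (dxprod_ft (bump K1 a) (bump K2 c) (K1+K2) t))^2)"
    proof (cases "t \<in> ?I")
      case True
      have "L \<le> Xweight \<alpha>1 s (b-1) (K1+K2) t * cmod (dxprod_ft (bump K1 a) (bump K2 c) (K1+K2) t)"
        using mult_mono[OF V[OF True] norm_dxprod_ft_bump_ge Xweight_nonneg] True \<open>0 \<le> V\<close>
        by (simp add: L_def)
      then have "L^2 \<le> (Xweight \<alpha>1 s (b-1) (K1+K2) t * cmod (dxprod_ft (bump K1 a) (bump K2 c) (K1+K2) t))^2"
        using \<open>L \<ge> 0\<close> by (rule power_mono)
      then show ?thesis using True by simp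
    qed simp
  qed
  also have "\<dots> \<le> Xnorm2 \<alpha>1 s (b - 1) (dxprod_ft (bump K1 a) (bump K2 c))"
    by (rule Xnorm2_ge_frequency)
  also have "\<dots> \<le> ennreal (C\<^sup>2) * Xnorm2 \<alpha>1 s b (bump K1 a) * Xnorm2 \<alpha>2 s b (bump K2 c)"
    using est meanzero by (auto simp: bilinear_est_with_def inX_bump bump_def)
  also have "\<dots> \<le> ennreal (C\<^sup>2) * ennreal (W1^2) * ennreal (W2^2)"
    by (intro mult_mono Xnorm2_bump_le W1 W2) auto
  also have "\<dots> = ennreal ((\<bar>C\<bar> * W1 * W2)^2)"
    by (simp add: ennreal_mult' power_mult_distrib)
  finally have "L^2 \<le> (\<bar>C\<bar> * W1 * W2)^2"
    by (subst (asm) ennreal_le_iff) auto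
  then show ?thesis
    unfolding L_def[symmetric] using \<open>W1 \<ge> 0\<close> \<open>W2 \<ge> 0\<close> by (auto intro: power2_le_imp_le)
qed

text \<open>Bumps at distances \<open>\<sigma>1, \<sigma>2\<close> from the curves \<open>\<tau> = \<alpha>\<^sub>j K\<^sub>j\<^sup>3\<close> produce an output at
  distance \<open>resonance + \<sigma>1 + \<sigma>2\<close> from \<open>\<tau> = \<alpha>1 (K1 + K2)\<^sup>3\<close>.\<close>
lemma gain_bound_off_curve:
  assumes "bilinear_est_with \<alpha>1 \<alpha>2 s b meanzero C" and "meanzero \<longrightarrow> K2 \<noteq> 0"
  shows "gain s K1 K2 * jbr (resonance \<alpha>1 \<alpha>2 K1 K2 + \<sigma>1 + \<sigma>2) powr (b - 1)
    \<le> 8*pi^2*\<bar>C\<bar> * 4 powr \<bar>b\<bar> * 3 powr \<bar>b-1\<bar> * (jbr \<sigma>1 powr b * jbr \<sigma>2 powr b)"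
proof -
  define H where "H = resonance \<alpha>1 \<alpha>2 K1 K2"
  define x1 where "x1 = jbr (real_of_int K1) powr s"
  define x2 where "x2 = jbr (real_of_int K2) powr s"
  define x where "x = jbr (real_of_int (K1 + K2)) powr s"
  define a where "a = \<alpha>1 * (real_of_int K1)^3 + \<sigma>1"
  define c where "c = \<alpha>2 * (real_of_int K2)^3 + \<sigma>2"
  define J where "J = jbr (H + \<sigma>1 + \<sigma>2) powr (b-1)"
  define J1 where "J1 = jbr \<sigma>1 powr b"
  define J2 where "J2 = jbr \<sigma>2 powr b"
  define Q where "Q = 8*pi^2*\<bar>C\<bar> * 4 powr \<bar>b\<bar> * 3 powr \<bar>b-1\<bar>"
  have pos: "x1 > 0" "x2 > 0" "x > 0"
    by (simp_all add: x1_def x2_def x_def jbr_pos)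
  have ac: "a + c = \<alpha>1 * (real_of_int (K1 + K2))^3 + (H + \<sigma>1 + \<sigma>2)"
    by (simp add: a_def c_def H_def resonance_def)
  have bumps: "3 powr (-\<bar>b-1\<bar>) * (x * J) * \<bar>real_of_int K1\<bar> / (8*pi^2)
      \<le> \<bar>C\<bar> * (2 powr \<bar>b\<bar> * (x1 * J1)) * (2 powr \<bar>b\<bar> * (x2 * J2))"
  proof (rule bump_pair_estimate[OF assms])
    show "Xweight \<alpha>1 s b K1 \<tau> \<le> 2 powr \<bar>b\<bar> * (x1 * J1)" if "\<tau> \<in> {a..a+1}" for \<tau>
      using Xweight_le_near_curve[of \<tau> \<alpha>1 K1 \<sigma>1 1] that by (simp add: a_def x1_def J1_def)
    show "Xweight \<alpha>2 s b K2 \<tau> \<le> 2 powr \<bar>b\<bar> * (x2 * J2)" if "\<tau> \<in> {c..c+1}" for \<tau>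
      using Xweight_le_near_curve[of \<tau> \<alpha>2 K2 \<sigma>2 1] that by (simp add: c_def x2_def J2_def)
    show "3 powr (-\<bar>b-1\<bar>) * (x * J) \<le> Xweight \<alpha>1 s (b-1) (K1+K2) \<tau>"
      if "\<tau> \<in> {a+c+1/2..a+c+3/2}" for \<tau>
      using Xweight_ge_near_curve[of \<tau> \<alpha>1 "K1+K2" "H + \<sigma>1 + \<sigma>2" 2 "b-1" s] that
      by (simp add: ac x_def J_def)
  qed (simp add: pos J_def less_imp_le)
  have "x * J * \<bar>real_of_int K1\<bar>
      = 3 powr (-\<bar>b-1\<bar>) * (x * J) * \<bar>real_of_int K1\<bar> / (8*pi^2) * (8*pi^2 * 3 powr \<bar>b-1\<bar>)"
    by (simp add: powr_minus)
  also have "\<dots> \<le> \<bar>C\<bar> * (2 powr \<bar>b\<bar> * (x1 * J1)) * (2 powr \<bar>b\<bar> * (x2 * J2)) * (8*pi^2 * 3 powr \<bar>b-1\<bar>)"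
    by (rule mult_right_mono[OF bumps]) simp
  also have "\<dots> = Q * (J1 * J2) * (x1 * x2)"
    by (simp add: Q_def powr_mult[of 2 2, simplified] mult_ac)
  finally have "gain s K1 K2 * J \<le> Q * (J1 * J2)"
    using pos by (simp add: gain_def x_def x1_def x2_def pos_divide_le_eq mult_ac)
  then show ?thesis
    by (simp add: H_def J_def J1_def J2_def Q_def)
qed

text \<open>Bumps on the curves, or the first bump moved by \<open>-resonance\<close> so that the output lies on
  its curve, give the exponents \<open>b - 1\<close> and \<open>-b\<close> on \<open>\<langle>resonance\<rangle>\<close>; one of them is at least \<open>-1/2\<close>.\<close>
lemma gain_resonance_bound:
  assumes "bilinear_est_with \<alpha>1 \<alpha>2 s b meanzero C" and "meanzero \<longrightarrow> K2 \<noteq> 0"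
  shows "gain s K1 K2 * jbr (resonance \<alpha>1 \<alpha>2 K1 K2) powr (-1/2)
    \<le> 8*pi^2*\<bar>C\<bar> * 4 powr \<bar>b\<bar> * 3 powr \<bar>b-1\<bar>"
proof -
  define H where "H = resonance \<alpha>1 \<alpha>2 K1 K2"
  define Q where "Q = 8*pi^2*\<bar>C\<bar> * 4 powr \<bar>b\<bar> * 3 powr \<bar>b-1\<bar>"
  show ?thesis
  proof (cases "b \<ge> 1/2")
    case True
    have "jbr H powr (-1/2) \<le> jbr H powr (b-1)"
      using True jbr_ge_1 by (intro powr_mono) auto
    then have "gain s K1 K2 * jbr H powr (-1/2) \<le> gain s K1 K2 * jbr H powr (b-1)"
      by (intro mult_left_mono gain_nonneg)
    also have "\<dots> \<le> Q"
      using gain_bound_off_curve[OF assms, of K1 0 0] by (simp add: H_def Q_def)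
    finally show ?thesis by (simp add: H_def Q_def)
  next
    case False
    have "jbr H powr (-1/2) \<le> jbr H powr (-b)"
      using False jbr_ge_1 by (intro powr_mono) auto
    then have "gain s K1 K2 * jbr H powr (-1/2) \<le> gain s K1 K2 * jbr H powr (-b)"
      by (intro mult_left_mono gain_nonneg)
    also have "\<dots> \<le> Q"
    proof -
      have "gain s K1 K2 \<le> Q * jbr H powr b"
        using gain_bound_off_curve[OF assms, of K1 "-H" 0] by (simp add: H_def Q_def)
      then show ?thesis
        by (simp add: powr_minus_divide pos_divide_le_eq jbr_pos)
    qed
    finally show ?thesis by (simp add: H_def Q_def)
  qed
qed

lemma not_bilinear_estI:
  fixes k l :: "nat \<Rightarrow> int"
  assumes "filterlim (\<lambda>j. gain s (k j) (l j) * jbr (resonance \<alpha>1 \<alpha>2 (k j) (l j)) powr (-1/2))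
             at_top sequentially"
    and "eventually (\<lambda>j. meanzero \<longrightarrow> l j \<noteq> 0) sequentially"
  shows "\<not> bilinear_est \<alpha>1 \<alpha>2 s b meanzero"
proof
  assume "bilinear_est \<alpha>1 \<alpha>2 s b meanzero"
  then obtain C where est: "bilinear_est_with \<alpha>1 \<alpha>2 s b meanzero C"
    by (auto simp: bilinear_est_iff)
  let ?Q = "8*pi^2*\<bar>C\<bar> * 4 powr \<bar>b\<bar> * 3 powr \<bar>b-1\<bar>"
  have "eventually (\<lambda>j. ?Q < gain s (k j) (l j) * jbr (resonance \<alpha>1 \<alpha>2 (k j) (l j)) powr (-1/2))
          sequentially"
    using assms(1) by (simp add: filterlim_at_top_dense)
  from eventually_happens'[OF _ eventually_conj[OF this assms(2)]] obtain j where
    "?Q < gain s (k j) (l j) * jbr (resonance \<alpha>1 \<alpha>2 (k j) (l j)) powr (-1/2)"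
    and "meanzero \<longrightarrow> l j \<noteq> 0"
    by auto
  then show False
    using gain_resonance_bound[OF est] by (meson not_le)
qed

section \<open>Cases (a), (b) and (d)\<close>

lemma filterlim_powr_at_top:
  assumes "e > 0"
  shows "filterlim (\<lambda>x::real. x powr e) at_top at_top"
proof (rule filterlim_cong[THEN iffD1, OF refl refl _ filterlim_compose[OF exp_at_top]])
  show "eventually (\<lambda>x. exp (e * ln x) = x powr e) at_top"
    using eventually_gt_at_top[of 0] by eventually_elim (simp add: powr_def)
  show "filterlim (\<lambda>x. e * ln x) at_top at_top"
    using assms by (intro filterlim_tendsto_pos_mult_at_top[OF tendsto_const] ln_at_top)
qed

lemma filterlim_at_top_if_ge_powr:
  fixes f x :: "'a \<Rightarrow> real"
  assumes "c > 0" "e > 0" "filterlim x at_top F" "eventually (\<lambda>j. c * x j powr e \<le> f j) F"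
  shows "filterlim f at_top F"
proof (rule filterlim_at_top_mono[OF _ assms(4)])
  show "filterlim (\<lambda>j. c * x j powr e) at_top F"
    using filterlim_compose[OF filterlim_powr_at_top[OF assms(2)] assms(3)]
    by (rule filterlim_tendsto_pos_mult_at_top[OF tendsto_const assms(1)])
qed

lemma gain_0_right [simp]: "gain s K 0 = \<bar>real_of_int K\<bar>"
  by (simp add: gain_def)

lemma resonance_0_right [simp]: "resonance \<alpha>1 \<alpha>2 K 0 = 0"
  by (simp add: resonance_def)

lemma not_bilinear_est_without_mean_zero: "\<not> bilinear_est \<alpha>1 \<alpha>2 s b False"
  by (rule not_bilinear_estI[where k = int and l = "\<lambda>_. 0"]) (simp_all add: filterlim_real_sequentially)

lemma gain_opposite: "gain s (int N) (- int N) = real N * (1 + real N) powr (- 2 * s)"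
proof -
  have "(1 + real N) powr s * (1 + real N) powr s = inverse ((1 + real N) powr (- 2 * s))"
    by (simp add: powr_minus flip: powr_add)
  then show ?thesis
    by (simp add: gain_def jbr_def divide_inverse)
qed

lemma resonance_opposite: "resonance \<alpha>1 \<alpha>2 (int N) (- int N) = (\<alpha>1 - \<alpha>2) * real N ^ 3"
  by (simp add: resonance_def algebra_simps)

lemma eventually_opposite_nonzero: "eventually (\<lambda>N. meanzero \<longrightarrow> - int N \<noteq> 0) sequentially"
  using eventually_gt_at_top[of 0] by eventually_elim simp

lemma not_bilinear_est_equal_dispersion:
  assumes "s < 1/2"
  shows "\<not> bilinear_est \<alpha> \<alpha> s b True"
proof (rule not_bilinear_estI[where k = int and l = "\<lambda>N. - int N", OF _ eventually_opposite_nonzero])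
  have ev: "eventually (\<lambda>N. 1/2 * (1 + real N) powr (1 - 2 * s)
          \<le> gain s (int N) (- int N) * jbr (resonance \<alpha> \<alpha> (int N) (- int N)) powr (-1/2)) sequentially"
    using eventually_ge_at_top[of 1]
  proof eventually_elim
    case (elim N)
    have "(1 + real N) powr (1 - 2 * s) = (1 + real N) powr 1 * (1 + real N) powr (- 2 * s)"
      by (subst powr_add[symmetric]) simp
    then have "1/2 * (1 + real N) powr (1 - 2 * s) = (1 + real N) / 2 * (1 + real N) powr (- 2 * s)"
      by simp
    also have "\<dots> \<le> real N * (1 + real N) powr (- 2 * s)"
      using elim by (intro mult_right_mono) auto
    finally show ?case
      by (simp add: gain_opposite resonance_opposite)
  qed
  have lim: "filterlim (\<lambda>N. 1 + real N) at_top sequentially"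
    by (intro filterlim_tendsto_add_at_top[OF tendsto_const] filterlim_real_sequentially)
  show "filterlim (\<lambda>N. gain s (int N) (- int N) * jbr (resonance \<alpha> \<alpha> (int N) (- int N)) powr (-1/2))
      at_top sequentially"
    by (rule filterlim_at_top_if_ge_powr[OF _ _ lim ev]) (use assms in auto)
qed

lemma not_bilinear_est_low_regularity:
  assumes "s < -1/4"
  shows "\<not> bilinear_est \<alpha>1 \<alpha>2 s b True"
proof (rule not_bilinear_estI[where k = int and l = "\<lambda>N. - int N", OF _ eventually_opposite_nonzero])
  define d where "d = \<bar>\<alpha>1 - \<alpha>2\<bar>"
  have ev: "eventually (\<lambda>N. (1 + d) powr (-1/2) * real N powr (-1/2 - 2 * s)
          \<le> gain s (int N) (- int N) * jbr (resonance \<alpha>1 \<alpha>2 (int N) (- int N)) powr (-1/2)) sequentially"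
    using eventually_ge_at_top[of 1]
  proof eventually_elim
    case (elim N)
    then have N: "real N \<ge> 1" by simp
    have "jbr (resonance \<alpha>1 \<alpha>2 (int N) (- int N)) = 1 + d * real N ^ 3"
      by (simp add: resonance_opposite jbr_def d_def abs_mult)
    also have "\<dots> \<le> (1 + d) * real N powr 3"
      using N by (simp add: d_def powr_realpow algebra_simps)
    finally have "((1 + d) * real N powr 3) powr (-1/2)
        \<le> jbr (resonance \<alpha>1 \<alpha>2 (int N) (- int N)) powr (-1/2)"
      using N by (intro powr_mono2') (auto simp: d_def jbr_pos)
    moreover have "real N powr (- 2 * s) \<le> (1 + real N) powr (- 2 * s)"
      using assms by (intro powr_mono2) auto
    ultimately have "real N * real N powr (- 2 * s) * ((1 + d) * real N powr 3) powr (-1/2)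
        \<le> gain s (int N) (- int N) * jbr (resonance \<alpha>1 \<alpha>2 (int N) (- int N)) powr (-1/2)"
      unfolding gain_opposite by (intro mult_mono mult_left_mono) auto
    moreover have "real N * real N powr (- 2 * s) * ((1 + d) * real N powr 3) powr (-1/2)
        = (1 + d) powr (-1/2) * real N powr (-1/2 - 2 * s)"
    proof -
      have "-1/2 - 2 * s = 1 + (- 2 * s) + 3 * (-1/2)" by simp
      then have "real N powr (-1/2 - 2 * s) = real N powr 1 * real N powr (- 2 * s) * (real N powr 3) powr (-1/2)"
        by (simp only: powr_add powr_powr)
      then show ?thesis
        using N by (simp add: powr_mult d_def)
    qed
    ultimately show ?case by simp
  qed
  show "filterlim (\<lambda>N. gain s (int N) (- int N) * jbr (resonance \<alpha>1 \<alpha>2 (int N) (- int N)) powr (-1/2))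
      at_top sequentially"
    by (rule filterlim_at_top_if_ge_powr[OF _ _ filterlim_real_sequentially ev]) (use assms in \<open>auto simp: d_def\<close>)
qed

section \<open>Near-resonant frequencies for case (c)\<close>

lemma powr_between_scaled:
  fixes L U x y s :: real
  assumes "0 < L" "0 < x" "L * x \<le> y" "y \<le> U * x"
  shows "min (L powr s) (U powr s) * x powr s \<le> y powr s"
    and "y powr s \<le> max (L powr s) (U powr s) * x powr s"
proof -
  define t where "t = y / x"
  have t: "L \<le> t" "t \<le> U"
    using assms by (auto simp: t_def field_simps)
  have y: "y powr s = t powr s * x powr s"
    using assms by (simp add: t_def powr_divide)
  have "min (L powr s) (U powr s) \<le> t powr s \<and> t powr s \<le> max (L powr s) (U powr s)"
  proof (cases "s \<ge> 0")
    case True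
    then have "L powr s \<le> t powr s" "t powr s \<le> U powr s"
      using t assms by (auto intro: powr_mono2)
    then show ?thesis by linarith
  next
    case False
    then have "U powr s \<le> t powr s" "t powr s \<le> L powr s"
      using t assms by (auto intro: powr_mono2')
    then show ?thesis by linarith
  qed
  then show "min (L powr s) (U powr s) * x powr s \<le> y powr s"
    and "y powr s \<le> max (L powr s) (U powr s) * x powr s"
    unfolding y by (auto intro: mult_right_mono)
qed

lemma gain_ge_if_comparable:
  assumes "0 < L" "0 < x" "L * x \<le> \<bar>real_of_int K1\<bar>"
    and comparable: "\<And>k. k \<in> {K1, K2, K1 + K2} \<Longrightarrow> L * x \<le> jbr (real_of_int k) \<and> jbr (real_of_int k) \<le> U * x"
  shows "L * min (L powr s) (U powr s) / (max (L powr s) (U powr s))^2 * x powr (1 - s) \<le> gain s K1 K2"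
proof -
  define mn where "mn = min (L powr s) (U powr s)"
  define mx where "mx = max (L powr s) (U powr s)"
  have "L * x \<le> U * x"
    using comparable[of K1] by auto
  then have "0 < U"
    using assms(1,2) by simp
  then have "mn > 0" "mx > 0"
    using assms by (auto simp: mn_def mx_def less_max_iff_disj)
  have upper: "jbr (real_of_int k) powr s \<le> mx * x powr s" if "k \<in> {K1, K2}" for k
    using powr_between_scaled(2)[OF assms(1,2)] comparable[of k] that by (auto simp: mx_def)
  have lower: "mn * x powr s \<le> jbr (real_of_int (K1 + K2)) powr s"
    using powr_between_scaled(1)[OF assms(1,2)] comparable[of "K1 + K2"] by (auto simp: mn_def)
  have "L * mn / mx^2 * x powr (1 - s) = (L * x) * (mn * x powr s) / ((mx * x powr s) * (mx * x powr s))"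
    using \<open>x > 0\<close> \<open>mx > 0\<close> by (simp add: powr_diff power2_eq_square field_simps flip: powr_add)
  also have "\<dots> \<le> \<bar>real_of_int K1\<bar> * jbr (real_of_int (K1 + K2)) powr s
      / (jbr (real_of_int K1) powr s * jbr (real_of_int K2) powr s)"
    using assms(3) lower upper \<open>x > 0\<close> \<open>mn > 0\<close> \<open>mx > 0\<close>
    by (intro frac_le mult_mono mult_pos_pos) (auto simp: jbr_pos)
  finally show ?thesis
    by (simp add: gain_def mn_def mx_def)
qed

lemma resonance_factor:
  "resonance \<alpha>1 ((\<rho>^2 + 3)/12 * \<alpha>1) (m - 3*n) (6*n)
     = 18 * \<alpha>1 * real_of_int n * (\<rho> * real_of_int n - real_of_int m) * (\<rho> * real_of_int n + real_of_int m)"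
  by (simp add: resonance_def algebra_simps power3_eq_cube power2_eq_square)

lemma frequencies_comparable_near_rational:
  fixes m n :: int
  assumes "\<rho> \<ge> 0" "1 \<le> real_of_int n" "1 \<le> \<bar>\<rho> - 3\<bar> / 2 * real_of_int n"
    and approx: "\<bar>\<rho> * real_of_int n - real_of_int m\<bar> \<le> 1"
  defines "L \<equiv> min (\<bar>\<rho> - 3\<bar> / 2) 1"
  shows "L * real_of_int n \<le> \<bar>real_of_int (m - 3*n)\<bar>"
    and "k \<in> {m - 3*n, 6*n, m - 3*n + 6*n} \<Longrightarrow>
           L * real_of_int n \<le> jbr (real_of_int k) \<and> jbr (real_of_int k) \<le> (\<rho> + 7) * real_of_int n"
proof -
  define x where "x = real_of_int n"
  define y where "y = real_of_int m"
  have "x \<ge> 1"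
    using assms(2) by (simp add: x_def)
  have "L \<le> \<bar>\<rho> - 3\<bar> / 2" "L \<le> 1"
    unfolding L_def by (rule min.cobounded1, rule min.cobounded2)
  then have "L * x \<le> \<bar>\<rho> - 3\<bar> / 2 * x" "L * x \<le> x" "\<rho> * x \<ge> 0"
    using assms(1,2) by (auto simp: x_def intro: mult_right_mono)
  have "\<bar>\<rho> * x - 3 * x\<bar> = \<bar>\<rho> - 3\<bar> * x"
    using assms(2) by (simp add: x_def abs_mult flip: left_diff_distrib)
  moreover have "\<bar>\<rho> * x - 3 * x\<bar> \<le> \<bar>y - 3 * x\<bar> + \<bar>\<rho> * x - y\<bar>"
    by linarith
  ultimately show "L * x \<le> \<bar>real_of_int (m - 3*n)\<bar>"
    using assms(3) approx \<open>L * x \<le> \<bar>\<rho> - 3\<bar> / 2 * x\<close> by (simp add: x_def y_def)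
  then have "L * x \<le> \<bar>y - 3 * x\<bar>"
    by (simp add: x_def y_def)
  moreover have "\<rho> * x - 1 \<le> y" "y \<le> \<rho> * x + 1"
    using approx by (auto simp: x_def y_def)
  ultimately have "\<bar>y - 3 * x\<bar> \<le> 1 + \<rho> * x + 3 * x" "2 * x \<le> \<bar>y + 3 * x\<bar>"
    "\<bar>y + 3 * x\<bar> \<le> 1 + \<rho> * x + 3 * x"
    using \<open>\<rho> * x \<ge> 0\<close> \<open>x \<ge> 1\<close> by (auto simp: abs_le_iff)
  moreover have "(\<rho> + 7) * x = \<rho> * x + 7 * x"
    by (simp add: algebra_simps)
  ultimately have bounds: "L * x \<le> 1 + \<bar>y - 3 * x\<bar> \<and> 1 + \<bar>y - 3 * x\<bar> \<le> (\<rho> + 7) * x"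
    "L * x \<le> 1 + 6 * x \<and> 1 + 6 * x \<le> (\<rho> + 7) * x"
    "L * x \<le> 1 + \<bar>y + 3 * x\<bar> \<and> 1 + \<bar>y + 3 * x\<bar> \<le> (\<rho> + 7) * x"
    using \<open>x \<ge> 1\<close> \<open>L * x \<le> x\<close> \<open>\<rho> * x \<ge> 0\<close> \<open>L * x \<le> \<bar>y - 3 * x\<bar>\<close> by (intro conjI; linarith)+
  have "jbr (real_of_int (m - 3*n)) = 1 + \<bar>y - 3 * x\<bar>" "jbr (real_of_int (6*n)) = 1 + 6 * x"
    "jbr (real_of_int (m - 3*n + 6*n)) = 1 + \<bar>y + 3 * x\<bar>"
    using \<open>x \<ge> 1\<close> by (simp_all add: jbr_def x_def y_def)
  with bounds show "L * x \<le> jbr (real_of_int k) \<and> jbr (real_of_int k) \<le> (\<rho> + 7) * x"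
    if "k \<in> {m - 3*n, 6*n, m - 3*n + 6*n}"
    using that by auto
qed

lemma gain_ge_near_rational:
  assumes "\<rho> \<ge> 0" "\<rho> \<noteq> 3"
  obtains c x0 where "c > 0"
    and "\<And>m n. x0 \<le> real_of_int n \<Longrightarrow> \<bar>\<rho> * real_of_int n - real_of_int m\<bar> \<le> 1 \<Longrightarrow>
           c * real_of_int n powr (1 - s) \<le> gain s (m - 3*n) (6*n)"
proof
  define L where "L = min (\<bar>\<rho> - 3\<bar> / 2) 1"
  define U where "U = \<rho> + 7"
  have "0 < L"
    using assms(2) by (simp add: L_def)
  show "L * min (L powr s) (U powr s) / (max (L powr s) (U powr s))^2 > 0"
    using \<open>0 < L\<close> assms(1) by (intro divide_pos_pos mult_pos_pos) (auto simp: U_def max_def)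
  fix m n assume n: "max 1 (2 / \<bar>\<rho> - 3\<bar>) \<le> real_of_int n"
    and approx: "\<bar>\<rho> * real_of_int n - real_of_int m\<bar> \<le> 1"
  have "1 \<le> real_of_int n" "1 \<le> \<bar>\<rho> - 3\<bar> / 2 * real_of_int n"
    using n assms(2) by (auto simp: field_simps)
  note comparable = frequencies_comparable_near_rational[OF assms(1) this approx, folded L_def U_def]
  show "L * min (L powr s) (U powr s) / (max (L powr s) (U powr s))^2 * real_of_int n powr (1 - s)
      \<le> gain s (m - 3*n) (6*n)"
    using \<open>1 \<le> real_of_int n\<close> comparable(2)
    by (intro gain_ge_if_comparable[OF \<open>0 < L\<close> _ comparable(1)]) auto
qed

lemma jbr_resonance_le_near_rational:
  assumes "\<rho> \<ge> 0" "\<mu> \<le> 3" "1 \<le> real_of_int n"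
    and close: "\<bar>\<rho> * real_of_int n - real_of_int m\<bar> \<le> real_of_int n powr (1 - \<mu>)"
    and "\<bar>\<rho> * real_of_int n - real_of_int m\<bar> \<le> 1"
  shows "jbr (resonance \<alpha>1 ((\<rho>^2 + 3)/12 * \<alpha>1) (m - 3*n) (6*n))
    \<le> (1 + 18 * \<bar>\<alpha>1\<bar> * (2*\<rho> + 1)) * real_of_int n powr (3 - \<mu>)"
proof -
  define x where "x = real_of_int n"
  define y where "y = real_of_int m"
  define D where "D = 18 * \<bar>\<alpha>1\<bar> * (2*\<rho> + 1)"
  have "x \<ge> 1" "\<rho> * x \<ge> 0"
    using assms by (simp_all add: x_def)
  have "\<bar>\<rho> * x + y\<bar> \<le> (2*\<rho> + 1) * x"
    using assms(5) \<open>x \<ge> 1\<close> \<open>\<rho> * x \<ge> 0\<close> by (simp add: x_def y_def abs_le_iff algebra_simps)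
  have "\<bar>resonance \<alpha>1 ((\<rho>^2 + 3)/12 * \<alpha>1) (m - 3*n) (6*n)\<bar> = 18 * \<bar>\<alpha>1\<bar> * x * \<bar>\<rho> * x - y\<bar> * \<bar>\<rho> * x + y\<bar>"
    unfolding resonance_factor using \<open>x \<ge> 1\<close> by (simp add: abs_mult x_def y_def)
  also have "\<dots> \<le> 18 * \<bar>\<alpha>1\<bar> * x * x powr (1 - \<mu>) * ((2*\<rho> + 1) * x)"
    using close \<open>\<bar>\<rho> * x + y\<bar> \<le> (2*\<rho> + 1) * x\<close> \<open>x \<ge> 1\<close>
    by (intro mult_mono mult_left_mono) (auto simp: x_def y_def)
  also have "\<dots> = D * x powr (3 - \<mu>)"
  proof -
    have "3 - \<mu> = 1 + (1 - \<mu>) + 1" by simp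
    then have "x powr (3 - \<mu>) = x powr 1 * x powr (1 - \<mu>) * x powr 1"
      by (simp only: powr_add)
    then show ?thesis
      using \<open>x \<ge> 1\<close> by (simp add: D_def algebra_simps)
  qed
  finally have "jbr (resonance \<alpha>1 ((\<rho>^2 + 3)/12 * \<alpha>1) (m - 3*n) (6*n)) \<le> 1 + D * x powr (3 - \<mu>)"
    by (simp add: jbr_def)
  also have "\<dots> \<le> (1 + D) * x powr (3 - \<mu>)"
    using \<open>x \<ge> 1\<close> assms(2) ge_one_powr_ge_zero[of x "3 - \<mu>"] by (simp add: algebra_simps)
  finally show ?thesis
    by (simp add: D_def x_def)
qed

lemma abs_mult_diff_le_powr:
  fixes x y \<rho> \<mu> :: real
  assumes "x > 0" "\<bar>\<rho> - y / x\<bar> \<le> x powr (-\<mu>)"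
  shows "\<bar>\<rho> * x - y\<bar> \<le> x powr (1 - \<mu>)"
proof -
  have "\<bar>\<rho> * x - y\<bar> = x * \<bar>\<rho> - y / x\<bar>"
    using assms(1) by (simp add: field_simps abs_mult flip: abs_of_pos)
  also have "\<dots> \<le> x * x powr (-\<mu>)"
    using assms by (intro mult_left_mono) auto
  also have "\<dots> = x powr (1 - \<mu>)"
    using assms(1) by (simp add: powr_diff powr_minus field_simps)
  finally show ?thesis .
qed

lemma ratio_ge_near_rational:
  assumes "\<rho> \<ge> 0" "\<rho> \<noteq> 3" "1 \<le> \<mu>" "\<mu> \<le> 3"
  obtains c x0 where "c > 0"
    and "\<And>m n. x0 \<le> real_of_int n \<Longrightarrow>
           \<bar>\<rho> - real_of_int m / real_of_int n\<bar> \<le> real_of_int n powr (-\<mu>) \<Longrightarrow>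
           c * real_of_int n powr ((\<mu> - 1)/2 - s)
             \<le> gain s (m - 3*n) (6*n) * jbr (resonance \<alpha>1 ((\<rho>^2 + 3)/12 * \<alpha>1) (m - 3*n) (6*n)) powr (-1/2)"
proof -
  obtain c1 x1 where "c1 > 0"
    and gain: "\<And>m n. x1 \<le> real_of_int n \<Longrightarrow> \<bar>\<rho> * real_of_int n - real_of_int m\<bar> \<le> 1 \<Longrightarrow>
                 c1 * real_of_int n powr (1 - s) \<le> gain s (m - 3*n) (6*n)"
    using gain_ge_near_rational[OF assms(1,2)] by blast
  define D where "D = 18 * \<bar>\<alpha>1\<bar> * (2*\<rho> + 1)"
  have "D \<ge> 0" using assms(1) by (simp add: D_def)
  show thesis
  proof (rule that[of "c1 * (1 + D) powr (-1/2)" "max x1 1"])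
    show "c1 * (1 + D) powr (-1/2) > 0"
      using \<open>c1 > 0\<close> \<open>D \<ge> 0\<close> by simp
    fix m n assume n: "max x1 1 \<le> real_of_int n"
      and approx: "\<bar>\<rho> - real_of_int m / real_of_int n\<bar> \<le> real_of_int n powr (-\<mu>)"
    define x where "x = real_of_int n"
    define H where "H = resonance \<alpha>1 ((\<rho>^2 + 3)/12 * \<alpha>1) (m - 3*n) (6*n)"
    have "x \<ge> 1" using n by (simp add: x_def)
    have close: "\<bar>\<rho> * x - real_of_int m\<bar> \<le> x powr (1 - \<mu>)"
      using abs_mult_diff_le_powr[of x \<rho> "real_of_int m" \<mu>] approx \<open>x \<ge> 1\<close> by (simp add: x_def)
    moreover have "x powr (1 - \<mu>) \<le> 1"
      using \<open>x \<ge> 1\<close> assms(3) powr_mono[of "1 - \<mu>" 0 x] by simp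
    ultimately have "\<bar>\<rho> * x - real_of_int m\<bar> \<le> 1" by linarith
    then have "c1 * x powr (1 - s) \<le> gain s (m - 3*n) (6*n)"
      using gain n by (simp add: x_def)
    moreover have "((1 + D) * x powr (3 - \<mu>)) powr (-1/2) \<le> jbr H powr (-1/2)"
      using jbr_resonance_le_near_rational[OF assms(1,4), of n m \<alpha>1] close \<open>x \<ge> 1\<close>
        \<open>\<bar>\<rho> * x - real_of_int m\<bar> \<le> 1\<close> \<open>D \<ge> 0\<close>
      by (intro powr_mono2') (auto simp: H_def D_def x_def jbr_pos)
    ultimately have le: "c1 * x powr (1 - s) * ((1 + D) * x powr (3 - \<mu>)) powr (-1/2)
        \<le> gain s (m - 3*n) (6*n) * jbr H powr (-1/2)"
      using \<open>c1 > 0\<close> by (intro mult_mono) (auto simp: gain_nonneg)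
    have eq: "c1 * x powr (1 - s) * ((1 + D) * x powr (3 - \<mu>)) powr (-1/2)
        = c1 * (1 + D) powr (-1/2) * x powr ((\<mu> - 1)/2 - s)"
    proof -
      have "(\<mu> - 1)/2 - s = (1 - s) + (3 - \<mu>) * (-1/2)" by (simp add: field_simps)
      then have "x powr ((\<mu> - 1)/2 - s) = x powr (1 - s) * (x powr (3 - \<mu>)) powr (-1/2)"
        by (simp only: powr_add powr_powr)
      then show ?thesis
        using \<open>D \<ge> 0\<close> by (simp add: powr_mult)
    qed
    show "c1 * (1 + D) powr (-1/2) * real_of_int n powr ((\<mu> - 1)/2 - s)
        \<le> gain s (m - 3*n) (6*n) * jbr (resonance \<alpha>1 ((\<rho>^2 + 3)/12 * \<alpha>1) (m - 3*n) (6*n)) powr (-1/2)"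
      using le eq unfolding x_def H_def by linarith
  qed
qed

definition approximable :: "real \<Rightarrow> real \<Rightarrow> bool" where
  "approximable \<rho> \<mu> \<longleftrightarrow>
     (\<forall>B. \<exists>m n::int. B < real_of_int n \<and> \<bar>\<rho> - real_of_int m / real_of_int n\<bar> \<le> real_of_int n powr (-\<mu>))"

lemma approximable_sequence:
  assumes "approximable \<rho> \<mu>"
  obtains n m :: "nat \<Rightarrow> int" where "\<And>j. real j < real_of_int (n j)"
    and "\<And>j. \<bar>\<rho> - real_of_int (m j) / real_of_int (n j)\<bar> \<le> real_of_int (n j) powr (-\<mu>)"
proof -
  have "\<forall>j::nat. \<exists>p::int \<times> int. real j < real_of_int (snd p) \<and>
      \<bar>\<rho> - real_of_int (fst p) / real_of_int (snd p)\<bar> \<le> real_of_int (snd p) powr (-\<mu>)"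
    using assms by (auto simp: approximable_def)
  then obtain p :: "nat \<Rightarrow> int \<times> int" where p: "\<And>j. real j < real_of_int (snd (p j)) \<and>
      \<bar>\<rho> - real_of_int (fst (p j)) / real_of_int (snd (p j))\<bar> \<le> real_of_int (snd (p j)) powr (-\<mu>)"
    by (metis choice)
  show thesis
  proof (rule that[of "snd \<circ> p" "fst \<circ> p"])
    show "real j < real_of_int ((snd \<circ> p) j)" for j
      using p[of j] by simp
    show "\<bar>\<rho> - real_of_int ((fst \<circ> p) j) / real_of_int ((snd \<circ> p) j)\<bar> \<le> real_of_int ((snd \<circ> p) j) powr (-\<mu>)"
      for j
      using p[of j] by simp
  qed
qed

lemma not_bilinear_est_approximable:
  assumes "\<rho> \<ge> 0" "\<rho> \<noteq> 3" "1 \<le> \<mu>" "\<mu> \<le> 3" "s < (\<mu> - 1)/2" and "approximable \<rho> \<mu>"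
  shows "\<not> bilinear_est \<alpha>1 ((\<rho>^2 + 3)/12 * \<alpha>1) s b True"
proof -
  obtain n m :: "nat \<Rightarrow> int" where n: "\<And>j. real j < real_of_int (n j)"
    and approx: "\<And>j. \<bar>\<rho> - real_of_int (m j) / real_of_int (n j)\<bar> \<le> real_of_int (n j) powr (-\<mu>)"
    by (rule approximable_sequence[OF assms(6)]) (rule that)
  obtain c x0 where "c > 0" and ratio: "\<And>m n. x0 \<le> real_of_int n \<Longrightarrow>
           \<bar>\<rho> - real_of_int m / real_of_int n\<bar> \<le> real_of_int n powr (-\<mu>) \<Longrightarrow>
           c * real_of_int n powr ((\<mu> - 1)/2 - s)
             \<le> gain s (m - 3*n) (6*n) * jbr (resonance \<alpha>1 ((\<rho>^2 + 3)/12 * \<alpha>1) (m - 3*n) (6*n)) powr (-1/2)"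
    using ratio_ge_near_rational[OF assms(1-4)] by blast
  have lim: "filterlim (\<lambda>j. real_of_int (n j)) at_top sequentially"
    using n by (intro filterlim_at_top_mono[OF filterlim_real_sequentially]) (simp add: less_imp_le)
  have "eventually (\<lambda>j. x0 \<le> real_of_int (n j)) sequentially"
    using lim by (simp add: filterlim_at_top)
  then have ev: "eventually (\<lambda>j. c * real_of_int (n j) powr ((\<mu> - 1)/2 - s)
      \<le> gain s (m j - 3 * n j) (6 * n j) *
         jbr (resonance \<alpha>1 ((\<rho>^2 + 3)/12 * \<alpha>1) (m j - 3 * n j) (6 * n j)) powr (-1/2)) sequentially"
    by eventually_elim (rule ratio[OF _ approx])
  show ?thesis
  proof (rule not_bilinear_estI[where k = "\<lambda>j. m j - 3 * n j" and l = "\<lambda>j. 6 * n j"])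
    show "filterlim (\<lambda>j. gain s (m j - 3 * n j) (6 * n j) *
        jbr (resonance \<alpha>1 ((\<rho>^2 + 3)/12 * \<alpha>1) (m j - 3 * n j) (6 * n j)) powr (-1/2)) at_top sequentially"
      by (rule filterlim_at_top_if_ge_powr[OF \<open>c > 0\<close> _ lim ev]) (use assms(5) in simp)
    have "n j \<noteq> 0" for j
      using n[of j] by auto
    then show "eventually (\<lambda>j. True \<longrightarrow> 6 * n j \<noteq> 0) sequentially"
      by simp
  qed
qed

section \<open>Irrationality exponent\<close>

definition approximants :: "real \<Rightarrow> real \<Rightarrow> (int \<times> int) set" where
  "approximants \<rho> \<mu> = {(m, n). n \<noteq> 0 \<and> 0 < \<bar>\<rho> - real_of_int m / real_of_int n\<bar> \<and>
        \<bar>\<rho> - real_of_int m / real_of_int n\<bar> < \<bar>real_of_int n\<bar> powr (-\<mu>)}"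

lemma irr_exp_approximants: "irr_exp \<rho> = Sup (ereal ` {\<mu>. infinite (approximants \<rho> \<mu>)})"
  by (simp add: irr_exp_def approximants_def)

lemma approximants_antimono:
  assumes "\<mu>' \<le> \<mu>"
  shows "approximants \<rho> \<mu> \<subseteq> approximants \<rho> \<mu>'"
proof clarify
  fix m n assume "(m, n) \<in> approximants \<rho> \<mu>"
  moreover from this have "\<bar>real_of_int n\<bar> powr (-\<mu>) \<le> \<bar>real_of_int n\<bar> powr (-\<mu>')"
    using assms by (intro powr_mono) (auto simp: approximants_def)
  ultimately show "(m, n) \<in> approximants \<rho> \<mu>'"
    by (auto simp: approximants_def)
qed

lemma finite_pairs_if_bounded_denominator:
  fixes B :: real and S :: "(int \<times> int) set"
  assumes "\<And>m n. (m, n) \<in> S \<Longrightarrow> n \<noteq> 0 \<and> \<bar>\<rho> - real_of_int m / real_of_int n\<bar> < 1 \<and> \<bar>real_of_int n\<bar> \<le> B"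
  shows "finite S"
proof -
  define R :: int where "R = \<lceil>B * (\<bar>\<rho>\<bar> + 1)\<rceil> + \<lceil>B\<rceil>"
  have "S \<subseteq> {-R..R} \<times> {-R..R}"
  proof clarify
    fix m n assume "(m, n) \<in> S"
    with assms have n: "n \<noteq> 0" "\<bar>real_of_int n\<bar> \<le> B"
      and close: "\<bar>\<rho> - real_of_int m / real_of_int n\<bar> < 1" by auto
    have "\<bar>real_of_int m / real_of_int n\<bar> \<le> \<bar>\<rho>\<bar> + 1"
      using close by linarith
    then have "\<bar>real_of_int m\<bar> \<le> (\<bar>\<rho>\<bar> + 1) * \<bar>real_of_int n\<bar>"
      using n by (simp add: abs_divide field_simps)
    also have "\<dots> \<le> B * (\<bar>\<rho>\<bar> + 1)"
      using mult_right_mono[of "\<bar>real_of_int n\<bar>" B "\<bar>\<rho>\<bar> + 1"] n by (simp add: mult.commute)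
    finally have "\<bar>real_of_int m\<bar> \<le> B * (\<bar>\<rho>\<bar> + 1)" .
    moreover have "B \<ge> 0" "B * (\<bar>\<rho>\<bar> + 1) \<ge> 0"
      using n by auto
    ultimately have "\<bar>real_of_int m\<bar> \<le> real_of_int R" "\<bar>real_of_int n\<bar> \<le> real_of_int R"
      using n unfolding R_def by linarith+
    then show "m \<in> {-R..R} \<and> n \<in> {-R..R}"
      by auto
  qed
  then show ?thesis
    by (rule finite_subset) auto
qed

lemma approximable_if_infinite_approximants:
  assumes "infinite (approximants \<rho> \<mu>)" and "\<mu> \<ge> 0"
  shows "approximable \<rho> \<mu>"
  unfolding approximable_def
proof (rule ccontr)
  assume "\<not> (\<forall>B. \<exists>m n::int. B < real_of_int n \<and>
              \<bar>\<rho> - real_of_int m / real_of_int n\<bar> \<le> real_of_int n powr (-\<mu>))"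
  then obtain B where B: "\<And>m n. B < real_of_int n \<Longrightarrow>
      \<bar>\<rho> - real_of_int m / real_of_int n\<bar> > real_of_int n powr (-\<mu>)"
    by (auto simp: not_le)
  have "finite (approximants \<rho> \<mu>)"
  proof (rule finite_pairs_if_bounded_denominator[where B = "max B 0"])
    fix m n assume "(m, n) \<in> approximants \<rho> \<mu>"
    then have n: "n \<noteq> 0" and lt: "\<bar>\<rho> - real_of_int m / real_of_int n\<bar> < \<bar>real_of_int n\<bar> powr (-\<mu>)"
      by (auto simp: approximants_def)
    have "\<bar>real_of_int n\<bar> powr (-\<mu>) \<le> 1"
      using powr_mono[of "-\<mu>" 0 "\<bar>real_of_int n\<bar>"] n assms(2) by simp
    moreover have "\<bar>real_of_int n\<bar> \<le> max B 0"
    proof (rule ccontr)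
      assume "\<not> ?thesis"
      define m' where "m' = (if n > 0 then m else - m)"
      define n' where "n' = (if n > 0 then n else - n)"
      have "real_of_int n' = \<bar>real_of_int n\<bar>" "real_of_int m' / real_of_int n' = real_of_int m / real_of_int n"
        using n by (auto simp: m'_def n'_def)
      then show False
        using B[of n' m'] lt \<open>\<not> \<bar>real_of_int n\<bar> \<le> max B 0\<close> by (auto simp: not_le)
    qed
    ultimately show "n \<noteq> 0 \<and> \<bar>\<rho> - real_of_int m / real_of_int n\<bar> < 1 \<and> \<bar>real_of_int n\<bar> \<le> max B 0"
      using n lt by auto
  qed
  then show False
    using assms(1) by simp
qed

lemma approximable_rational:
  assumes "\<rho> \<in> \<rat>"
  shows "approximable \<rho> \<mu>"
  unfolding approximable_def
proof
  fix B :: real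
  obtain p q :: int where "q > 0" and \<rho>: "\<rho> = real_of_int p / real_of_int q"
    using Rats_cases'[OF assms] by metis
  define t :: int where "t = \<lceil>\<bar>B\<bar>\<rceil> + 1"
  have "t > 0" "\<bar>B\<bar> < real_of_int t"
    unfolding t_def by linarith+
  moreover have "real_of_int t \<le> real_of_int q * real_of_int t"
    using \<open>q > 0\<close> \<open>t > 0\<close> by simp
  ultimately have "B < real_of_int (q * t)"
    using abs_ge_self[of B] by (simp only: of_int_mult)
  moreover have "real_of_int (p * t) / real_of_int (q * t) = \<rho>"
    using \<open>t > 0\<close> by (simp add: \<rho>)
  ultimately show "\<exists>m n::int. B < real_of_int n \<and> \<bar>\<rho> - real_of_int m / real_of_int n\<bar> \<le> real_of_int n powr (-\<mu>)"
    by (intro exI[of _ "p * t"] exI[of _ "q * t"]) simp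
qed

lemma infinite_approximants_rational:
  fixes p q :: int
  assumes "q > 0" and "\<mu> < 1"
  shows "infinite (approximants (real_of_int p / real_of_int q) \<mu>)"
proof
  assume fin: "finite (approximants (real_of_int p / real_of_int q) \<mu>)"
  define f where "f t = (p * t + 1, q * t)" for t :: int
  have "inj_on f {2..}"
    using assms(1) by (auto simp: f_def inj_on_def)
  moreover have "f ` {2..} \<subseteq> approximants (real_of_int p / real_of_int q) \<mu>"
  proof (rule image_subsetI)
    fix t :: int assume t: "t \<in> {2..}"
    define x where "x = real_of_int (q * t)"
    have "1 * 2 \<le> q * t"
      using assms(1) t by (intro mult_mono) auto
    then have "x > 1"
      unfolding x_def by linarith
    have "real_of_int p / real_of_int q - real_of_int (p * t + 1) / real_of_int (q * t) = - (1 / x)"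
      using assms(1) t \<open>x > 1\<close> unfolding x_def by (simp add: field_simps)
    moreover have "1 / x < x powr (-\<mu>)"
      using \<open>x > 1\<close> assms(2) powr_less_mono[of "-1" "-\<mu>" x] by (simp add: powr_minus_divide)
    ultimately show "f t \<in> approximants (real_of_int p / real_of_int q) \<mu>"
      using \<open>x > 1\<close> by (auto simp: f_def approximants_def x_def)
  qed
  ultimately have "finite {2::int..}"
    using fin finite_subset finite_imageD by metis
  then show False
    using infinite_Ici by blast
qed

lemma finite_approximants_rational:
  fixes p q :: int
  assumes "q > 0" and "\<mu> > 1"
  shows "finite (approximants (real_of_int p / real_of_int q) \<mu>)"
proof -
  have "eventually (\<lambda>x. real_of_int q < x powr (\<mu> - 1)) at_top"
    using filterlim_powr_at_top[of "\<mu> - 1"] assms(2) by (simp add: filterlim_at_top_dense)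
  then obtain B where B: "\<And>x. B \<le> x \<Longrightarrow> real_of_int q < x powr (\<mu> - 1)"
    by (auto simp: eventually_at_top_linorder)
  show ?thesis
  proof (rule finite_pairs_if_bounded_denominator[where B = B])
    fix m n assume mn: "(m, n) \<in> approximants (real_of_int p / real_of_int q) \<mu>"
    define a where "a = \<bar>real_of_int n\<bar>"
    have n: "n \<noteq> 0" and lt: "\<bar>real_of_int p / real_of_int q - real_of_int m / real_of_int n\<bar> < a powr (-\<mu>)"
      and pos: "0 < \<bar>real_of_int p / real_of_int q - real_of_int m / real_of_int n\<bar>"
      using mn by (auto simp: approximants_def a_def)
    have "a \<ge> 1"
      using n unfolding a_def by linarith
    have "a powr (-\<mu>) \<le> 1"
      using powr_mono[of "-\<mu>" 0 a] \<open>a \<ge> 1\<close> assms(2) by simp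
    have diff: "real_of_int p / real_of_int q - real_of_int m / real_of_int n
        = real_of_int (p * n - q * m) / (real_of_int q * real_of_int n)"
      using n assms(1) by (simp add: field_simps)
    then have "p * n - q * m \<noteq> 0"
      using pos by (metis abs_zero div_0 less_irrefl of_int_0)
    then have "\<bar>real_of_int (p * n - q * m)\<bar> \<ge> 1"
      by linarith
    then have "1 / (real_of_int q * a) \<le> \<bar>real_of_int p / real_of_int q - real_of_int m / real_of_int n\<bar>"
      unfolding diff a_def using assms(1) n by (simp add: abs_divide abs_mult divide_right_mono)
    then have "1 / (real_of_int q * a) < a powr (-\<mu>)"
      using lt by linarith
    then have "1 < real_of_int q * (a * a powr (-\<mu>))"
      using assms(1) \<open>a \<ge> 1\<close> by (simp add: divide_less_eq mult_ac)
    also have "a * a powr (-\<mu>) = inverse (a powr (\<mu> - 1))"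
      using \<open>a \<ge> 1\<close> by (simp add: powr_diff powr_minus field_simps)
    finally have "a powr (\<mu> - 1) < real_of_int q"
      using \<open>a \<ge> 1\<close> by (simp add: field_simps)
    then have "a \<le> B"
      using B by (meson le_less_linear less_asym)
    then show "n \<noteq> 0 \<and> \<bar>real_of_int p / real_of_int q - real_of_int m / real_of_int n\<bar> < 1
        \<and> \<bar>real_of_int n\<bar> \<le> B"
      using n lt \<open>a powr (-\<mu>) \<le> 1\<close> by (auto simp: a_def)
  qed
qed

lemma irr_exp_rational:
  assumes "\<rho> \<in> \<rat>"
  shows "irr_exp \<rho> = 1"
proof -
  obtain p q :: int where q: "q > 0" and \<rho>: "\<rho> = real_of_int p / real_of_int q"
    using Rats_cases'[OF assms] by metis
  have "Sup (ereal ` {\<mu>. infinite (approximants \<rho> \<mu>)}) \<le> 1"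
    using finite_approximants_rational[OF q] by (intro Sup_least) (force simp: \<rho> not_less)
  moreover have "1 \<le> Sup (ereal ` {\<mu>. infinite (approximants \<rho> \<mu>)})"
  proof (rule dense_le)
    fix y :: ereal assume "y < 1"
    then show "y \<le> Sup (ereal ` {\<mu>. infinite (approximants \<rho> \<mu>)})"
      using infinite_approximants_rational[OF q]
      by (cases y) (auto simp: \<rho> intro!: Sup_upper2[of "y"])
  qed
  ultimately show ?thesis
    by (simp add: irr_exp_approximants)
qed

lemma infinite_approximants_irrational:
  assumes "\<rho> \<notin> \<rat>"
  shows "infinite (approximants \<rho> 2)"
proof
  assume fin: "finite (approximants \<rho> 2)"
  define \<epsilon> where "\<epsilon> = Min (insert 1 ((\<lambda>(m, n). \<bar>\<rho> - real_of_int m / real_of_int n\<bar>) ` approximants \<rho> 2))"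
  have "\<epsilon> > 0"
    unfolding \<epsilon>_def using fin by (auto simp: approximants_def)
  have \<epsilon>_le: "\<epsilon> \<le> \<bar>\<rho> - real_of_int m / real_of_int n\<bar>" if "(m, n) \<in> approximants \<rho> 2" for m n
    unfolding \<epsilon>_def using fin that by (intro Min_le) auto
  obtain N :: nat where N: "real N > 1 / \<epsilon>"
    using reals_Archimedean2 by blast
  then have "N > 0"
    using \<open>\<epsilon> > 0\<close> by (cases N) auto
  then obtain h k :: int where k: "0 < k" "k \<le> int N" and hk: "\<bar>of_int k * \<rho> - of_int h\<bar> < 1 / real N"
    using Dirichlet_approx by metis
  have "\<rho> - real_of_int h / real_of_int k = (of_int k * \<rho> - of_int h) / real_of_int k"
    using k by (simp add: field_simps)
  then have dist: "\<bar>\<rho> - real_of_int h / real_of_int k\<bar> = \<bar>of_int k * \<rho> - of_int h\<bar> / real_of_int k"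
    using k by (simp add: abs_divide)
  then have lt: "\<bar>\<rho> - real_of_int h / real_of_int k\<bar> < 1 / (real N * real_of_int k)"
    using hk k by (simp add: divide_strict_right_mono field_simps)
  also have "\<dots> \<le> 1 / (real_of_int k * real_of_int k)"
    using k by (intro divide_left_mono mult_right_mono) auto
  also have "\<dots> = \<bar>real_of_int k\<bar> powr (-2)"
    using k by (simp add: powr_minus powr_realpow power2_eq_square field_simps)
  finally have "\<bar>\<rho> - real_of_int h / real_of_int k\<bar> < \<bar>real_of_int k\<bar> powr (-2)" .
  moreover have "\<rho> \<noteq> real_of_int h / real_of_int k"
    using assms by auto
  ultimately have "(h, k) \<in> approximants \<rho> 2"
    using k by (simp add: approximants_def)
  moreover have "1 / (real N * real_of_int k) \<le> 1 / real N"
    using k \<open>N > 0\<close> by (simp add: field_simps)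
  moreover have "1 / real N < \<epsilon>"
    using N \<open>\<epsilon> > 0\<close> \<open>N > 0\<close> by (simp add: field_simps)
  ultimately show False
    using \<epsilon>_le lt by fastforce
qed

lemma irr_exp_irrational_ge_2:
  assumes "\<rho> \<notin> \<rat>"
  shows "irr_exp \<rho> \<ge> 2"
  unfolding irr_exp_approximants using infinite_approximants_irrational[OF assms]
  by (intro Sup_upper) auto

lemma approximable_irrational:
  assumes "\<rho> \<notin> \<rat>" and "0 \<le> \<mu>" and "\<mu> \<le> 2 \<or> ereal \<mu> < irr_exp \<rho>"
  shows "approximable \<rho> \<mu>"
proof (rule approximable_if_infinite_approximants[OF _ assms(2)])
  from assms(3) obtain \<mu>' where "\<mu> \<le> \<mu>'" "infinite (approximants \<rho> \<mu>')"
  proof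
    assume "\<mu> \<le> 2"
    then show thesis
      using that infinite_approximants_irrational[OF assms(1)] by blast
  next
    assume "ereal \<mu> < irr_exp \<rho>"
    then show thesis
      using that unfolding irr_exp_approximants less_Sup_iff by (auto intro: less_imp_le)
  qed
  then show "infinite (approximants \<rho> \<mu>)"
    using approximants_antimono finite_subset by metis
qed

lemma irr_exp_cases:
  obtains (rational) "\<rho> \<in> \<rat>" "irr_exp \<rho> = 1"
    | (large) "\<rho> \<notin> \<rat>" "irr_exp \<rho> \<ge> 3"
    | (finite) \<sigma> where "\<rho> \<notin> \<rat>" "irr_exp \<rho> = ereal \<sigma>" "2 \<le> \<sigma>" "\<sigma> < 3"
proof (cases "\<rho> \<in> \<rat>")
  case False
  show thesis
  proof (cases "irr_exp \<rho> \<ge> 3")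
    case not_large: False
    have "irr_exp \<rho> \<ge> 2"
      by (rule irr_exp_irrational_ge_2[OF False])
    with not_large obtain \<sigma> where "irr_exp \<rho> = ereal \<sigma>" "2 \<le> \<sigma>" "\<sigma> < 3"
      by (cases "irr_exp \<rho>") auto
    with False that(3) show thesis
      by blast
  qed (use False that(2) in blast)
qed (use that(1) irr_exp_rational in blast)

lemma approximable_below_irr_exp:
  assumes "\<rho> \<notin> \<rat>" "2 \<le> \<sigma>" "\<sigma> \<le> 3" "ereal \<sigma> \<le> irr_exp \<rho>" "s < (\<sigma> - 1)/2"
  shows "\<exists>\<mu>. 1 \<le> \<mu> \<and> \<mu> \<le> 3 \<and> s < (\<mu> - 1)/2 \<and> approximable \<rho> \<mu>"
proof (intro exI conjI)
  define \<mu> where "\<mu> = max 2 ((2 * s + 1 + \<sigma>)/2)"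
  have "2 * s + 1 < \<sigma>"
    using assms(5) by (simp add: field_simps)
  then have "\<mu> \<le> 2 \<or> \<mu> < \<sigma>"
    using assms(2) by (simp add: \<mu>_def) arith
  then show "1 \<le> \<mu>" "\<mu> \<le> 3"
    using assms(3) by (auto simp: \<mu>_def)
  from \<open>\<mu> \<le> 2 \<or> \<mu> < \<sigma>\<close> have "\<mu> \<le> 2 \<or> ereal \<mu> < irr_exp \<rho>"
    using assms(4) less_le_trans[of "ereal \<mu>" "ereal \<sigma>" "irr_exp \<rho>"] by auto
  then show "approximable \<rho> \<mu>"
    using assms(1) by (intro approximable_irrational) (auto simp: \<mu>_def)
  have "2 * s + 1 < (2 * s + 1 + \<sigma>)/2"
    using \<open>2 * s + 1 < \<sigma>\<close> by (simp add: field_simps)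
  then have "2 * s + 1 < \<mu>"
    unfolding \<mu>_def by (rule less_le_trans) simp
  then show "s < (\<mu> - 1)/2"
    by (simp add: field_simps)
qed

lemma approximable_exponent_below_s_r:
  assumes "r \<ge> 1/4" and "s < s_r r"
  obtains \<mu> where "1 \<le> \<mu>" "\<mu> \<le> 3" "s < (\<mu> - 1)/2" "approximable (sqrt (12 * r - 3)) \<mu>"
proof -
  define \<rho> where "\<rho> = sqrt (12 * r - 3)"
  have sigma: "sigma_r r = irr_exp \<rho>"
    by (simp add: sigma_r_def \<rho>_def)
  show thesis
  proof (cases \<rho> rule: irr_exp_cases)
    case rational
    then have "s < (3 - 1)/2"
      using assms(2) by (simp add: s_r_def sigma)
    then show thesis
      using approximable_rational[OF rational(1)] by (intro that[of 3]) (simp_all add: \<rho>_def)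
  next
    case large
    then have "s < (3 - 1)/2"
      using assms(2) by (simp add: s_r_def sigma)
    then show thesis
      using approximable_below_irr_exp[OF large(1), of 3] large(2) that by (auto simp: \<rho>_def)
  next
    case (finite \<sigma>)
    then have "s < (\<sigma> - 1)/2"
      using assms(2) by (simp add: s_r_def sigma)
    then show thesis
      using approximable_below_irr_exp[OF finite(1,3), of s] finite(2,4) that by (auto simp: \<rho>_def)
  qed
qed

lemma not_bilinear_est_below_s_r:
  assumes "\<alpha>1 \<noteq> 0" "r = \<alpha>2 / \<alpha>1" "r \<ge> 1/4" "r \<noteq> 1" "s < s_r r"
  shows "\<not> bilinear_est \<alpha>1 \<alpha>2 s b True"
proof -
  define \<rho> where "\<rho> = sqrt (12 * r - 3)"
  have "\<rho> \<ge> 0" "\<rho>^2 = 12 * r - 3"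
    using assms(3) by (simp_all add: \<rho>_def)
  moreover have "\<alpha>2 = r * \<alpha>1"
    using assms(1,2) by simp
  ultimately have \<alpha>2: "\<alpha>2 = (\<rho>^2 + 3)/12 * \<alpha>1"
    by simp
  have "\<rho> \<noteq> 3"
    using \<open>\<rho>^2 = 12 * r - 3\<close> assms(4) by auto
  obtain \<mu> where "1 \<le> \<mu>" "\<mu> \<le> 3" "s < (\<mu> - 1)/2" "approximable \<rho> \<mu>"
    using approximable_exponent_below_s_r[OF assms(3,5), folded \<rho>_def] .
  then show ?thesis
    unfolding \<alpha>2 by (rule not_bilinear_est_approximable[OF \<open>\<rho> \<ge> 0\<close> \<open>\<rho> \<noteq> 3\<close>])
qed

theorem proposition4p3:
  fixes \<alpha>1 \<alpha>2 s b r :: real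
  assumes "\<alpha>1 \<noteq> 0" and "\<alpha>2 \<noteq> 0"
    and "r = \<alpha>2 / \<alpha>1"
  shows "(r < 1/4 \<and> s < -1/4 \<longrightarrow> \<not> bilinear_est \<alpha>1 \<alpha>2 s b True)
       \<and> (r = 1 \<and> s < 1/2 \<longrightarrow> \<not> bilinear_est \<alpha>1 \<alpha>2 s b True)
       \<and> (r \<ge> 1/4 \<and> r \<noteq> 1 \<and> s < s_r r \<longrightarrow> \<not> bilinear_est \<alpha>1 \<alpha>2 s b True)
       \<and> \<not> bilinear_est \<alpha>1 \<alpha>2 s b False"
proof (intro conjI impI)
  assume "r < 1/4 \<and> s < -1/4"
  then show "\<not> bilinear_est \<alpha>1 \<alpha>2 s b True"
    by (intro not_bilinear_est_low_regularity) auto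
next
  assume "r = 1 \<and> s < 1/2"
  moreover from this have "\<alpha>2 = \<alpha>1"
    using assms by (simp add: field_simps)
  ultimately show "\<not> bilinear_est \<alpha>1 \<alpha>2 s b True"
    using not_bilinear_est_equal_dispersion by simp
next
  assume "r \<ge> 1/4 \<and> r \<noteq> 1 \<and> s < s_r r"
  then show "\<not> bilinear_est \<alpha>1 \<alpha>2 s b True"
    using not_bilinear_est_below_s_r[OF assms(1,3)] by simp
next
  show "\<not> bilinear_est \<alpha>1 \<alpha>2 s b False"
    by (rule not_bilinear_est_without_mean_zero)
qed

end
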